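(* Let $s,k\geq 2$. Then the circular graph $G(ks+1,k)=\operatorname{Cay}(\mathbb{Z}_{ks+1},\{k,k+1,\ldots,ks+1-k\})$ is isomorphic to the $s$-stable Kneser graph $\operatorname{KG}(ks+1,k)_{s-\operatorname{stab}}$.
   Context: For integers $s,k\geq 2$ and $n\geq ks$, a subset $S\subseteq[n]=\{1,\dots,n\}$ is $s$-stable if $s\leq |i-j|\leq n-s$ for all distinct $i,j\in S$. The $s$-stable Kneser graph $\operatorname{KG}(n,k)_{s-\operatorname{stab}}$ has as vertices the $s$-stable $k$-subsets of $[n]$, two vertices being adjacent iff they are disjoint. For a group $A$ and a subset $S\subseteq A$ closed under inverses and not containing the identity, the Cayley graph $\operatorname{Cay}(A,S)$ has vertex set $A$, with $u,v$ adjacent iff $u^{-1}v\in S$ (for the cyclic group $\mathbb{Z}_n$, iff $v-u\in S$). For $n\geq 2k$, the circular graph $G(n,k)$ is $\operatorname{Cay}(\mathbb{Z}_n,\{k,k+1,\ldots,n-k\})$. *)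

theory Defs
  imports Main
begin

definition graph_iso ::
  "'a set \<Rightarrow> ('a \<Rightarrow> 'a \<Rightarrow> bool) \<Rightarrow> 'b set \<Rightarrow> ('b \<Rightarrow> 'b \<Rightarrow> bool) \<Rightarrow> bool" where
  "graph_iso V1 E1 V2 E2 \<longleftrightarrow>
     (\<exists>f. bij_betw f V1 V2 \<and> (\<forall>u\<in>V1. \<forall>v\<in>V1. E1 u v \<longleftrightarrow> E2 (f u) (f v)))"

definition cay_Zn_vertices :: "nat \<Rightarrow> int set" where
  "cay_Zn_vertices n = {0..<int n}"

definition cay_Zn_adj :: "nat \<Rightarrow> int set \<Rightarrow> int \<Rightarrow> int \<Rightarrow> bool" where
  "cay_Zn_adj n S u v \<longleftrightarrow> (v - u) mod int n \<in> S"

definition circ_conn :: "nat \<Rightarrow> nat \<Rightarrow> int set" where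
  "circ_conn n k = {int k..int n - int k}"

definition s_stable :: "nat \<Rightarrow> nat \<Rightarrow> nat set \<Rightarrow> bool" where
  "s_stable n s S \<longleftrightarrow> S \<subseteq> {1..n} \<and>
     (\<forall>i\<in>S. \<forall>j\<in>S. i \<noteq> j \<longrightarrow>
        int s \<le> \<bar>int i - int j\<bar> \<and> \<bar>int i - int j\<bar> \<le> int n - int s)"

definition stab_kneser_vertices :: "nat \<Rightarrow> nat \<Rightarrow> nat \<Rightarrow> nat set set" where
  "stab_kneser_vertices n k s = {S. s_stable n s S \<and> card S = k}"

definition kneser_adj :: "nat set \<Rightarrow> nat set \<Rightarrow> bool" where
  "kneser_adj A B \<longleftrightarrow> A \<inter> B = {}"

end

theory Submission
  imports Defs
begin

text \<open>
  Let \<open>N = k s + 1\<close>. Since \<open>k s \<equiv> -1 (mod N)\<close>, the vertex \<open>u\<close> of \<open>G(N,k)\<close> can be sent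
  to the arithmetic progression \<open>{s (r - u) mod N | 0 \<le> r < k}\<close> of \<open>k\<close> terms with difference
  \<open>s\<close>; its elements \<open>x\<close> are those with \<open>(u - k x) mod N < k\<close>. Such a progression is
  \<open>s\<close>-stable, and the progressions of \<open>u\<close> and \<open>v\<close> meet iff \<open>v - u \<equiv> b - a\<close> for some
  \<open>0 \<le> a, b < k\<close>, i.e. iff \<open>v - u\<close> is not adjacent to \<open>0\<close> in \<open>G(N,k)\<close>. Conversely, the
  \<open>k\<close> cyclic gaps of an \<open>s\<close>-stable \<open>k\<close>-set are all at least \<open>s\<close> and sum to
  \<open>k s + 1\<close>, so all but one equal \<open>s\<close>: the set is such a progression.
\<close>

lemma mod_mem_symmetric_interval_iff:
  fixes z N c :: int
  assumes "\<bar>z\<bar> < N"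
  shows "z mod N \<in> {c..N - c} \<longleftrightarrow> \<bar>z\<bar> \<in> {c..N - c}"
proof (cases "0 \<le> z")
  case True
  then have "z mod N = z" using assms by (intro mod_pos_pos_trivial) auto
  then show ?thesis using True by simp
next
  case False
  have "z mod N = (z + N) mod N" by simp
  also have "\<dots> = z + N" using False assms by (intro mod_pos_pos_trivial) auto
  finally show ?thesis using False by auto
qed

lemma eq_zero_if_dvd_abs_less:
  fixes z N :: int
  assumes "\<bar>z\<bar> < N" "N dvd z"
  shows "z = 0"
  using assms dvd_imp_le_int[of z N] by auto

lemma monotone_zero_one_threshold:
  fixes e :: "nat \<Rightarrow> int"
  assumes mono: "\<And>i i'. i \<le> i' \<Longrightarrow> i' < k \<Longrightarrow> e i \<le> e i'"
    and zero_one: "\<And>i. i < k \<Longrightarrow> e i \<in> {0, 1}"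
  obtains j where "j \<le> k" "\<forall>i<k. e i = (if i < j then 0 else 1)"
proof
  define j where "j = (LEAST i. i = k \<or> e i = 1)"
  show "j \<le> k" unfolding j_def by (rule Least_le) simp
  show "\<forall>i<k. e i = (if i < j then 0 else 1)"
  proof (intro allI impI)
    fix i assume "i < k"
    show "e i = (if i < j then 0 else 1)"
    proof (cases "i < j")
      case True
      then show ?thesis
        using not_less_Least[of i "\<lambda>i. i = k \<or> e i = 1"] zero_one[OF \<open>i < k\<close>]
        unfolding j_def by auto
    next
      case False
      have "j = k \<or> e j = 1" unfolding j_def by (rule LeastI[of _ k]) simp
      then have "e j = 1" using False \<open>i < k\<close> by auto
      then show ?thesis using False mono[of j i] zero_one[OF \<open>i < k\<close>] \<open>i < k\<close> by auto
    qed
  qed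
qed

lemma nth_gaps_accumulate:
  fixes xs :: "nat list"
  assumes gap: "\<And>i. Suc i < length xs \<Longrightarrow> xs ! i + s \<le> xs ! Suc i"
    and "i \<le> j" "j < length xs"
  shows "xs ! i + (j - i) * s \<le> xs ! j"
  using assms(2,3)
proof (induction j rule: dec_induct)
  case base
  then show ?case by simp
next
  case (step j)
  then have "xs ! i + (j - i) * s + s \<le> xs ! Suc j" using gap[of j] by simp
  moreover have "(Suc j - i) * s = (j - i) * s + s" using \<open>i \<le> j\<close> by (simp add: Suc_diff_le)
  ultimately show ?case by simp
qed

lemma nth_eq_progression_with_jump:
  fixes xs :: "nat list"
  assumes gap: "\<And>i. Suc i < length xs \<Longrightarrow> xs ! i + s \<le> xs ! Suc i"
    and span: "xs ! (length xs - 1) \<le> xs ! 0 + (length xs - 1) * s + 1"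
  obtains j where "j \<le> length xs"
    "\<forall>i<length xs. xs ! i = xs ! 0 + i * s + (if i < j then 0 else 1)"
proof -
  define e where "e i = int (xs ! i) - int (xs ! 0) - int (i * s)" for i
  have mono: "e i \<le> e i'" if "i \<le> i'" "i' < length xs" for i i'
  proof -
    have "xs ! i + (i' - i) * s \<le> xs ! i'" by (rule nth_gaps_accumulate[OF gap that])
    moreover have "i * s + (i' - i) * s = i' * s"
      using that(1) by (simp add: add_mult_distrib [symmetric])
    ultimately show ?thesis unfolding e_def by linarith
  qed
  have zero_one: "e i \<in> {0, 1}" if "i < length xs" for i
  proof -
    have "e 0 \<le> e i" "e i \<le> e (length xs - 1)" using mono that by simp_all
    moreover have "e 0 = 0" by (simp add: e_def)
    moreover have "e (length xs - 1) \<le> 1" using span unfolding e_def by linarith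
    ultimately show ?thesis by auto
  qed
  obtain j where "j \<le> length xs" and j: "\<forall>i<length xs. e i = (if i < j then 0 else 1)"
    by (rule monotone_zero_one_threshold[OF mono zero_one])
  have "\<forall>i<length xs. xs ! i = xs ! 0 + i * s + (if i < j then 0 else 1)"
  proof (intro allI impI)
    fix i assume "i < length xs"
    then have "e i = (if i < j then 0 else 1)" using j by blast
    then have "int (xs ! i) = int (xs ! 0 + i * s + (if i < j then 0 else 1))"
      unfolding e_def by (cases "i < j") simp_all
    then show "xs ! i = xs ! 0 + i * s + (if i < j then 0 else 1)" by (simp only: of_nat_eq_iff)
  qed
  with \<open>j \<le> length xs\<close> show thesis by (rule that)
qed

text \<open>For \<open>N = k s + 1\<close>, \<open>progression_index N k u x\<close> is the \<open>r\<close> with \<open>x \<equiv> s (r - u) (mod N)\<close>.\<close>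

definition progression_index :: "nat \<Rightarrow> nat \<Rightarrow> int \<Rightarrow> nat \<Rightarrow> int" where
  "progression_index N k u x = (u - int k * int x) mod int N"

definition progression :: "nat \<Rightarrow> nat \<Rightarrow> int \<Rightarrow> nat set" where
  "progression N k u = {x \<in> {1..N}. progression_index N k u x < int k}"

context
  fixes N k s :: nat
  assumes N_eq: "N = k * s + 1" and k_pos: "0 < k" and s_ge_2: "2 \<le> s"
begin

lemma two_k_less_N: "2 * k < N"
proof -
  have "k * 2 \<le> k * s" using s_ge_2 by (rule mult_le_mono2)
  then show ?thesis using N_eq by linarith
qed

lemma progression_index_bounds: "0 \<le> progression_index N k u x" "progression_index N k u x < int N"
  using two_k_less_N by (simp_all add: progression_index_def)

lemma progression_index_congruence:
  "int x mod int N = (int s * (progression_index N k u x - u)) mod int N"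
proof -
  have "(int s * (progression_index N k u x - u)) mod int N = (int s * ((u - int k * int x) - u)) mod int N"
    unfolding progression_index_def by (metis mod_diff_left_eq mod_mult_right_eq)
  also have "int s * ((u - int k * int x) - u) = int x - int N * int x"
    using N_eq by (simp add: algebra_simps)
  also have "(int x - int N * int x) mod int N = int x mod int N"
    by (simp add: mod_eq_dvd_iff)
  finally show ?thesis by simp
qed

lemma inj_on_progression_index: "inj_on (progression_index N k u) {1..N}"
proof
  fix x y assume "x \<in> {1..N}" "y \<in> {1..N}" and "progression_index N k u x = progression_index N k u y"
  then have "int x mod int N = int y mod int N"
    using progression_index_congruence[of x u] progression_index_congruence[of y u] by simp
  then have "int N dvd int x - int y" by (simp add: mod_eq_dvd_iff)
  moreover have "\<bar>int x - int y\<bar> < int N" using \<open>x \<in> {1..N}\<close> \<open>y \<in> {1..N}\<close> by auto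
  ultimately show "x = y" using eq_zero_if_dvd_abs_less by fastforce
qed

lemma progression_index_image: "progression_index N k u ` {1..N} = {0..<int N}"
proof (rule card_subset_eq)
  show "progression_index N k u ` {1..N} \<subseteq> {0..<int N}"
    using progression_index_bounds by auto
  show "card (progression_index N k u ` {1..N}) = card {0..<int N}"
    using card_image[OF inj_on_progression_index] by simp
qed simp

lemma progression_index_image_progression:
  "progression_index N k u ` progression N k u = {0..<int k}"
proof
  show "progression_index N k u ` progression N k u \<subseteq> {0..<int k}"
    using progression_index_bounds by (auto simp: progression_def)
  show "{0..<int k} \<subseteq> progression_index N k u ` progression N k u"
  proof
    fix r assume r: "r \<in> {0..<int k}"
    then have "r \<in> progression_index N k u ` {1..N}"
      using progression_index_image two_k_less_N by auto
    then show "r \<in> progression_index N k u ` progression N k u"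
      using r by (auto simp: progression_def)
  qed
qed

lemma card_progression: "card (progression N k u) = k"
proof -
  have "inj_on (progression_index N k u) (progression N k u)"
    by (rule inj_on_subset[OF inj_on_progression_index]) (auto simp: progression_def)
  then have "card (progression N k u) = card (progression_index N k u ` progression N k u)"
    by (simp add: card_image)
  also have "\<dots> = k" unfolding progression_index_image_progression by simp
  finally show ?thesis .
qed

lemma progression_index_eq_zero:
  obtains x where "x \<in> progression N k u" "progression_index N k u x = 0"
proof -
  have "0 \<in> progression_index N k u ` progression N k u"
    unfolding progression_index_image_progression using k_pos by simp
  then obtain x where "x \<in> progression N k u" "0 = progression_index N k u x"
    by (rule imageE)
  then show thesis using that by simp
qed

lemma progression_index_diff_congruence:
  "(int x - int y) mod int N
     = (int s * (progression_index N k u x - progression_index N k u y)) mod int N"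
proof -
  have "(int x - int y) mod int N = (int x mod int N - int y mod int N) mod int N"
    by (simp add: mod_diff_eq)
  also have "\<dots> = (int s * (progression_index N k u x - u) - int s * (progression_index N k u y - u)) mod int N"
    unfolding progression_index_congruence[of x u] progression_index_congruence[of y u]
    by (simp add: mod_diff_eq)
  also have "int s * (progression_index N k u x - u) - int s * (progression_index N k u y - u)
      = int s * (progression_index N k u x - progression_index N k u y)"
    by (simp add: algebra_simps)
  finally show ?thesis .
qed

lemma progression_s_stable: "s_stable N s (progression N k u)"
  unfolding s_stable_def
proof (intro conjI ballI impI)
  show "progression N k u \<subseteq> {1..N}" by (auto simp: progression_def)
  fix x y assume x: "x \<in> progression N k u" and y: "y \<in> progression N k u" and "x \<noteq> y"
  define a where "a = progression_index N k u x"
  define b where "b = progression_index N k u y"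
  have "a \<noteq> b"
    using inj_onD[OF inj_on_progression_index] x y \<open>x \<noteq> y\<close>
    unfolding a_def b_def progression_def by blast
  moreover have "0 \<le> a" "a < int k" "0 \<le> b" "b < int k"
    using x y progression_index_bounds unfolding a_def b_def progression_def by auto
  ultimately have "1 \<le> \<bar>a - b\<bar>" "\<bar>a - b\<bar> \<le> int k - 1" by auto
  then have "int s * 1 \<le> int s * \<bar>a - b\<bar>" "int s * \<bar>a - b\<bar> \<le> int s * (int k - 1)"
    by (simp_all only: mult_left_mono of_nat_0_le_iff)
  moreover have "int s * (int k - 1) = int N - 1 - int s"
    using N_eq by (simp add: algebra_simps)
  ultimately have "\<bar>int s * (a - b)\<bar> \<in> {int s..int N - int s}" "\<bar>int s * (a - b)\<bar> < int N"
    by (simp_all add: abs_mult)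
  then have "(int s * (a - b)) mod int N \<in> {int s..int N - int s}"
    using mod_mem_symmetric_interval_iff by blast
  then have "(int x - int y) mod int N \<in> {int s..int N - int s}"
    using progression_index_diff_congruence unfolding a_def b_def by simp
  moreover have "\<bar>int x - int y\<bar> < int N" using x y by (auto simp: progression_def)
  ultimately have "\<bar>int x - int y\<bar> \<in> {int s..int N - int s}"
    using mod_mem_symmetric_interval_iff by blast
  then show "int s \<le> \<bar>int x - int y\<bar>" "\<bar>int x - int y\<bar> \<le> int N - int s" by auto
qed

lemma progression_index_shift:
  "progression_index N k v x = (v - u + progression_index N k u x) mod int N"
  unfolding progression_index_def by (simp add: mod_add_right_eq)

lemma progression_overlap_if_mod_less:
  assumes "(v - u) mod int N < int k"
  shows "progression N k u \<inter> progression N k v \<noteq> {}"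
proof -
  obtain x where x: "x \<in> progression N k u" "progression_index N k u x = 0"
    by (rule progression_index_eq_zero)
  then have "x \<in> progression N k v"
    using assms progression_index_shift[of v x u] by (simp add: progression_def)
  then show ?thesis using x by blast
qed

lemma progression_disjoint_iff:
  "progression N k u \<inter> progression N k v = {} \<longleftrightarrow>
    (v - u) mod int N \<in> {int k..int N - int k}"
proof
  assume "(v - u) mod int N \<in> {int k..int N - int k}"
  show "progression N k u \<inter> progression N k v = {}"
  proof (rule ccontr)
    assume "progression N k u \<inter> progression N k v \<noteq> {}"
    then obtain x where x: "x \<in> progression N k u" "x \<in> progression N k v" by blast
    define a where "a = progression_index N k u x"
    define b where "b = progression_index N k v x"
    have ab: "0 \<le> a" "a < int k" "0 \<le> b" "b < int k"
      using x progression_index_bounds unfolding a_def b_def progression_def by auto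
    have "(v - u) mod int N = (b - a) mod int N"
      unfolding a_def b_def progression_index_shift[of v x u] by (simp add: mod_diff_left_eq)
    moreover have "\<bar>b - a\<bar> < int N" using ab two_k_less_N by auto
    ultimately have "\<bar>b - a\<bar> \<in> {int k..int N - int k}"
      using \<open>(v - u) mod int N \<in> _\<close> mod_mem_symmetric_interval_iff by metis
    then show False using ab by auto
  qed
next
  assume disjoint: "progression N k u \<inter> progression N k v = {}"
  define d where "d = (v - u) mod int N"
  have "0 \<le> d" "d < int N" using two_k_less_N by (simp_all add: d_def)
  show "d \<in> {int k..int N - int k}"
  proof (rule ccontr)
    assume "d \<notin> {int k..int N - int k}"
    then consider "d < int k" | "int N - int k < d" by fastforce
    then show False
    proof cases
      case 1
      then show False using disjoint progression_overlap_if_mod_less d_def by blast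
    next
      case 2
      have "(u - v) mod int N = (if d = 0 then 0 else int N - d)"
        using zmod_zminus1_eq_if[of "v - u" "int N"] by (simp add: d_def)
      then have "(u - v) mod int N < int k" using 2 two_k_less_N by auto
      then show False using disjoint progression_overlap_if_mod_less by blast
    qed
  qed
qed

lemma inj_on_progression: "inj_on (progression N k) {0..<int N}"
proof
  fix u v assume u: "u \<in> {0..<int N}" and v: "v \<in> {0..<int N}"
    and eq: "progression N k u = progression N k v"
  have less_k: "(b - a) mod int N < int k" if "progression N k a = progression N k b" for a b
  proof -
    obtain x where x: "x \<in> progression N k a" "progression_index N k a x = 0"
      by (rule progression_index_eq_zero)
    then have "x \<in> progression N k b" using that by simp
    then have "progression_index N k b x < int k" by (simp add: progression_def)
    then show ?thesis using x(2) progression_index_shift[of b x a] by simp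
  qed
  have "(v - u) mod int N = 0"
  proof (rule ccontr)
    assume "(v - u) mod int N \<noteq> 0"
    then have "(u - v) mod int N = int N - (v - u) mod int N"
      using zmod_zminus1_eq_if[of "v - u" "int N"] by simp
    then show False using less_k[OF eq] less_k[OF eq [symmetric]] two_k_less_N by simp
  qed
  then have "int N dvd v - u" by (simp add: mod_eq_0_iff_dvd)
  moreover have "\<bar>v - u\<bar> < int N" using u v by auto
  ultimately show "u = v" using eq_zero_if_dvd_abs_less by fastforce
qed

lemma progression_mod: "progression N k (u mod int N) = progression N k u"
  unfolding progression_def progression_index_def by (simp add: mod_diff_left_eq)

lemma mem_progression_if_congruent:
  assumes "x \<in> {1..N}" "0 \<le> r" "r < int k" "int N dvd int x - int s * (r - u)"
  shows "x \<in> progression N k u"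
proof -
  have "(u - int k * int x) - (u - int k * (int s * (r - u))) = - int k * (int x - int s * (r - u))"
    by (simp add: algebra_simps)
  then have "int N dvd (u - int k * int x) - (u - int k * (int s * (r - u)))"
    using dvd_mult[OF assms(4), of "- int k"] by simp
  then have "progression_index N k u x = (u - int k * (int s * (r - u))) mod int N"
    unfolding progression_index_def by (simp add: mod_eq_dvd_iff)
  also have "u - int k * (int s * (r - u)) = r + int N * (u - r)"
    using N_eq by (simp add: algebra_simps)
  also have "(r + int N * (u - r)) mod int N = r"
    using assms(2,3) two_k_less_N by simp
  finally show ?thesis using assms by (simp add: progression_def)
qed

lemma s_stable_shape:
  assumes stable: "s_stable N s S" and card: "card S = k"
  obtains x0 j where "j \<le> k" "S = (\<lambda>i. x0 + i * s + (if i < j then 0 else 1)) ` {..<k}"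
proof -
  have "S \<subseteq> {1..N}" using stable by (simp add: s_stable_def)
  then have "finite S" by (rule finite_subset) simp
  define xs where "xs = sorted_list_of_set S"
  have set_xs: "set xs = S" and len: "length xs = k" and sorted: "sorted_wrt (<) xs"
    using \<open>finite S\<close> card strict_sorted_list_of_set by (simp_all add: xs_def)
  have dist: "int s \<le> int (xs ! i') - int (xs ! i) \<and> int (xs ! i') - int (xs ! i) \<le> int N - int s"
    if "i < i'" "i' < k" for i i'
  proof -
    have less: "xs ! i < xs ! i'" using sorted_wrt_nth_less[OF sorted] that len by simp
    have "xs ! i \<in> S" "xs ! i' \<in> S" using that len set_xs nth_mem by auto
    moreover have "\<forall>a\<in>S. \<forall>b\<in>S. a \<noteq> b \<longrightarrow>
        int s \<le> \<bar>int a - int b\<bar> \<and> \<bar>int a - int b\<bar> \<le> int N - int s"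
      using stable unfolding s_stable_def by (rule conjunct2)
    ultimately have "int s \<le> \<bar>int (xs ! i) - int (xs ! i')\<bar> \<and>
        \<bar>int (xs ! i) - int (xs ! i')\<bar> \<le> int N - int s"
      using less_imp_neq[OF less] by blast
    then show ?thesis using less by linarith
  qed
  have gap: "xs ! i + s \<le> xs ! Suc i" if "Suc i < length xs" for i
    using dist[of i "Suc i"] that len by simp
  have span: "xs ! (length xs - 1) \<le> xs ! 0 + (length xs - 1) * s + 1"
  proof (cases "k = 1")
    case False
    have "(k - 1) * s + s = k * s" using k_pos by (cases k) auto
    then have "int N - int s = int ((k - 1) * s) + 1" using N_eq by linarith
    moreover have "int (xs ! (k - 1)) - int (xs ! 0) \<le> int N - int s"
      using dist[of 0 "k - 1"] False k_pos by simp
    ultimately show ?thesis unfolding len by linarith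
  qed (simp add: len)
  obtain j where "j \<le> k" and nth: "\<forall>i<k. xs ! i = xs ! 0 + i * s + (if i < j then 0 else 1)"
    using nth_eq_progression_with_jump[OF gap span] unfolding len .
  have "S = (!) xs ` {..<k}"
    using nth_image[of k xs] len set_xs by (simp add: atLeast0LessThan)
  also have "\<dots> = (\<lambda>i. xs ! 0 + i * s + (if i < j then 0 else 1)) ` {..<k}"
    using nth by (intro image_cong) blast+
  finally show thesis by (rule that[OF \<open>j \<le> k\<close>])
qed

lemma s_stable_eq_progression:
  assumes stable: "s_stable N s S" and card: "card S = k"
  shows "\<exists>u \<in> {0..<int N}. S = progression N k u"
proof -
  obtain x0 j where "j \<le> k" and S: "S = (\<lambda>i. x0 + i * s + (if i < j then 0 else 1)) ` {..<k}"
    using s_stable_shape[OF assms] .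
  text \<open>Modulo \<open>N\<close>, the element \<open>x0 + i s + \<epsilon>\<close> equals \<open>s (r - u)\<close> with
    \<open>r = i + k - j - k \<epsilon>\<close>, which lies in \<open>[0, k)\<close> because \<open>\<epsilon> = 1\<close> exactly when \<open>i \<ge> j\<close>.\<close>
  define u where "u = int k * int x0 + int k - int j"
  have "S \<subseteq> progression N k u"
  proof
    fix x assume "x \<in> S"
    then obtain i where "i < k" and x: "x = x0 + i * s + (if i < j then 0 else 1)"
      using S by blast
    define \<epsilon> where "\<epsilon> = (if i < j then 0 else 1 :: int)"
    define r where "r = int i + int k - int j - int k * \<epsilon>"
    have "x \<in> {1..N}" using \<open>x \<in> S\<close> stable by (auto simp: s_stable_def)
    moreover have "0 \<le> r" "r < int k" using \<open>i < k\<close> \<open>j \<le> k\<close> by (auto simp: r_def \<epsilon>_def)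
    moreover have "int x - int s * (r - u) = int N * (int x0 + \<epsilon>)"
      using N_eq by (simp add: x r_def u_def \<epsilon>_def algebra_simps)
    ultimately show "x \<in> progression N k u"
      by (intro mem_progression_if_congruent) auto
  qed
  then have "S = progression N k u"
    using card card_progression by (intro card_subset_eq) (auto simp: progression_def)
  then have "S = progression N k (u mod int N)" by (simp add: progression_mod)
  moreover have "u mod int N \<in> {0..<int N}" using two_k_less_N by simp
  ultimately show ?thesis by blast
qed

lemma bij_betw_progression: "bij_betw (progression N k) {0..<int N} (stab_kneser_vertices N k s)"
  unfolding bij_betw_def
proof
  show "inj_on (progression N k) {0..<int N}" by (rule inj_on_progression)
  show "progression N k ` {0..<int N} = stab_kneser_vertices N k s"
  proof (intro equalityI subsetI)
    fix T assume "T \<in> progression N k ` {0..<int N}"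
    then show "T \<in> stab_kneser_vertices N k s"
      using progression_s_stable card_progression by (auto simp: stab_kneser_vertices_def)
  next
    fix S assume "S \<in> stab_kneser_vertices N k s"
    then have "s_stable N s S" "card S = k" by (simp_all add: stab_kneser_vertices_def)
    then show "S \<in> progression N k ` {0..<int N}" using s_stable_eq_progression by blast
  qed
qed

end

theorem mainTheorem7:
  fixes s k :: nat
  assumes "s \<ge> 2" and "k \<ge> 2"
  shows "graph_iso
           (cay_Zn_vertices (k * s + 1)) (cay_Zn_adj (k * s + 1) (circ_conn (k * s + 1) k))
           (stab_kneser_vertices (k * s + 1) k s) kneser_adj"
proof -
  let ?N = "k * s + 1"
  have "0 < k" using \<open>k \<ge> 2\<close> by simp
  note setting = refl[of ?N] this \<open>s \<ge> 2\<close>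
  show ?thesis
    unfolding graph_iso_def cay_Zn_vertices_def
  proof (intro exI conjI ballI)
    show "bij_betw (progression ?N k) {0..<int ?N} (stab_kneser_vertices ?N k s)"
      by (rule bij_betw_progression[OF setting])
    fix u v
    show "cay_Zn_adj ?N (circ_conn ?N k) u v \<longleftrightarrow>
        kneser_adj (progression ?N k u) (progression ?N k v)"
      using progression_disjoint_iff[OF setting]
      by (simp add: cay_Zn_adj_def circ_conn_def kneser_adj_def)
  qed
qed

end
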